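(* Let $w:\mathbb N\to\mathbb R_{>0}$ be one of the weight functions $w(n)=n+1$, $w(n)=1$, or $w(n)=\frac1{n+1}$, and let $d_w(x,y)=\sum_{j\ge0}w(j)|x_j-y_j|$ on $\mathbb Z^\infty$. For $j\in\mathbb N$ let $X_j=\mathbb Z_{\ge0}^j\times\mathbb Z_{\le0}\times\mathbb Z^\infty=\{x\in\mathbb Z^\infty: x_0,\dots,x_{j-1}\ge0,\ x_j\le0\}$. Then $\{X_j\}_{j\in\mathbb N}$ is a coarsely excisive cover of $(\mathbb Z^\infty,d_w)$: for every nonempty finite $J\subseteq\mathbb N$ and $R>0$ there is $S>0$ with $\bigcap_{j\in J}N_w(X_j,R)\subseteq N_w(\bigcap_{j\in J}X_j,S)$.
   Context: $\mathbb Z^\infty=\bigoplus_{\mathbb N}\mathbb Z$ is the set of integer sequences with finitely many nonzero entries. $N_w(Y,R)=\{x\in\mathbb Z^\infty:\inf_{y\in Y}d_w(x,y)\le R\}$. A cover by closed subsets is coarsely excisive if the stated neighborhood condition holds for all nonempty finite subcollections and all $R>0$. *)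

theory Defs
  imports "HOL-Analysis.Analysis"
begin

definition Zinf :: "(nat \<Rightarrow> int) set" where
  "Zinf = {x. finite {j. x j \<noteq> 0}}"

text \<open>Weighted l1 distance d_w(x,y) = sum_j w(j) |x_j - y_j|; for x,y in Zinf
  only finitely many terms are nonzero, so the series is this finite sum.\<close>
definition dw :: "(nat \<Rightarrow> real) \<Rightarrow> (nat \<Rightarrow> int) \<Rightarrow> (nat \<Rightarrow> int) \<Rightarrow> real" where
  "dw w x y = (\<Sum>j\<in>{j. x j \<noteq> y j}. w j * real_of_int \<bar>x j - y j\<bar>)"

definition Nw :: "(nat \<Rightarrow> real) \<Rightarrow> (nat \<Rightarrow> int) set \<Rightarrow> real \<Rightarrow> (nat \<Rightarrow> int) set" where
  "Nw w Y R = {x \<in> Zinf. Inf ((\<lambda>y. dw w x y) ` Y) \<le> R}"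

definition Xset :: "nat \<Rightarrow> (nat \<Rightarrow> int) set" where
  "Xset j = {x \<in> Zinf. (\<forall>i<j. x i \<ge> 0) \<and> x j \<le> 0}"

text \<open>A family of subsets of Zinf (indexed by nat) is a coarsely excisive cover
  of (Zinf, d_w): it covers Zinf, and for every nonempty finite J and R > 0
  there is S > 0 with the neighbourhood condition.  (All subsets are closed,
  since distinct points of Zinf have distance >= min weight on a finite support > 0.)\<close>
definition coarsely_excisive_cover ::
  "(nat \<Rightarrow> real) \<Rightarrow> (nat \<Rightarrow> (nat \<Rightarrow> int) set) \<Rightarrow> bool" where
  "coarsely_excisive_cover w X \<longleftrightarrow>
     (\<forall>j. X j \<subseteq> Zinf) \<and> (\<Union>j. X j) = Zinf \<and>
     (\<forall>J R. finite J \<and> J \<noteq> {} \<and> R > 0 \<longrightarrow>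
        (\<exists>S>0. (\<Inter>j\<in>J. Nw w (X j) R) \<subseteq> Nw w (\<Inter>j\<in>J. X j) S))"

end

theory Submission
  imports Defs
begin

text \<open>For nonnegative weights, every point of X_j is at distance at least
  V_j(x) = sum_{i<j} w_i max(-x_i, 0) + w_j max(x_j, 0) from x, so V_j(x) <= R on N_w(X_j, R).
  Given x in all N_w(X_j, R), j in J, let m = max J and clip x into the intersection of the
  X_j: below m, set the coordinates in J to 0 and the negative ones outside J to 0; at m,
  set a positive coordinate to 0. This costs exactly V_m(x) + sum_{i in J, i < m} w_i max(x_i, 0),
  and each summand is at most V_i(x) <= R, so S = |J| R works.\<close>

lemma Zinf_diff_finite:
  assumes "x \<in> Zinf" "y \<in> Zinf"
  shows "finite {i. x i \<noteq> y i}"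
proof -
  have "{i. x i \<noteq> y i} \<subseteq> {i. x i \<noteq> 0} \<union> {i. y i \<noteq> 0}" by auto
  thus ?thesis using assms unfolding Zinf_def by (auto intro: finite_subset)
qed

lemma dw_eq_sum_superset:
  assumes "finite A" "{i. x i \<noteq> y i} \<subseteq> A"
  shows "dw w x y = (\<Sum>i\<in>A. w i * real_of_int \<bar>x i - y i\<bar>)"
  unfolding dw_def by (rule sum.mono_neutral_left) (use assms in auto)

lemma dw_nonneg:
  assumes "\<And>n. w n \<ge> 0"
  shows "dw w x y \<ge> 0"
  unfolding dw_def using assms by (intro sum_nonneg) simp

lemma sum_le_dw:
  assumes "\<And>n. w n \<ge> 0" "x \<in> Zinf" "y \<in> Zinf" "finite A"
  shows "(\<Sum>i\<in>A. w i * real_of_int \<bar>x i - y i\<bar>) \<le> dw w x y"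
proof -
  let ?D = "{i. x i \<noteq> y i}"
  have "finite ?D" using Zinf_diff_finite assms by blast
  have "(\<Sum>i\<in>A. w i * real_of_int \<bar>x i - y i\<bar>) = (\<Sum>i\<in>A \<inter> ?D. w i * real_of_int \<bar>x i - y i\<bar>)"
    by (rule sum.mono_neutral_right) (use assms in auto)
  also have "\<dots> \<le> dw w x y"
    unfolding dw_def by (rule sum_mono2) (use \<open>finite ?D\<close> assms in auto)
  finally show ?thesis .
qed

lemma Nw_memI:
  assumes "\<And>n. w n \<ge> 0" "x \<in> Zinf" "y \<in> Y" "dw w x y \<le> S"
  shows "x \<in> Nw w Y S"
proof -
  have "Inf ((\<lambda>y. dw w x y) ` Y) \<le> dw w x y"
  proof (rule cInf_lower)
    show "bdd_below ((\<lambda>y. dw w x y) ` Y)"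
      by (rule bdd_belowI2[where m = 0]) (rule dw_nonneg[OF assms(1)])
  qed (use assms(3) in simp)
  thus ?thesis using assms unfolding Nw_def by auto
qed

lemma Nw_lower_bound:
  assumes "x \<in> Nw w Y R" "Y \<noteq> {}" "\<And>y. y \<in> Y \<Longrightarrow> c \<le> dw w x y"
  shows "c \<le> R"
proof -
  have "c \<le> Inf ((\<lambda>y. dw w x y) ` Y)" by (rule cInf_greatest) (use assms in auto)
  thus ?thesis using assms(1) unfolding Nw_def by auto
qed

lemma Xset_subset_Zinf: "Xset j \<subseteq> Zinf"
  unfolding Xset_def by auto

lemma zero_in_Xset: "(\<lambda>_. 0) \<in> Xset j"
  unfolding Xset_def Zinf_def by simp

lemma UN_Xset: "(\<Union>j. Xset j) = Zinf"
proof
  show "Zinf \<subseteq> (\<Union>j. Xset j)"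
  proof
    fix x assume x: "x \<in> Zinf"
    have ex: "\<exists>j. x j \<le> 0"
    proof (rule ccontr)
      assume "\<not> (\<exists>j. x j \<le> 0)"
      hence "{j. x j \<noteq> 0} = UNIV" by (metis (mono_tags) UNIV_eq_I mem_Collect_eq order_refl)
      thus False using x unfolding Zinf_def by simp
    qed
    define j where "j = (LEAST j. x j \<le> 0)"
    have "x j \<le> 0" unfolding j_def by (rule LeastI_ex[OF ex])
    moreover have "x i \<ge> 0" if "i < j" for i
      using not_less_Least[OF that[unfolded j_def]] by simp
    ultimately show "x \<in> (\<Union>j. Xset j)" using x unfolding Xset_def by blast
  qed
qed (use Xset_subset_Zinf in blast)

definition Xset_violation :: "(nat \<Rightarrow> real) \<Rightarrow> (nat \<Rightarrow> int) \<Rightarrow> nat \<Rightarrow> real" where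
  "Xset_violation w x j = (\<Sum>i<j. w i * real_of_int (max (- x i) 0)) + w j * real_of_int (max (x j) 0)"

lemma Xset_violation_ge_last:
  assumes "\<And>n. w n \<ge> 0"
  shows "w j * real_of_int (max (x j) 0) \<le> Xset_violation w x j"
  unfolding Xset_violation_def using assms by (simp add: sum_nonneg)

lemma Xset_violation_le_dw:
  assumes "\<And>n. w n \<ge> 0" "x \<in> Zinf" "y \<in> Xset j"
  shows "Xset_violation w x j \<le> dw w x y"
proof -
  have y: "y \<in> Zinf" "\<And>i. i < j \<Longrightarrow> y i \<ge> 0" "y j \<le> 0"
    using assms(3) unfolding Xset_def by auto
  have "real_of_int (max (- x i) 0) \<le> real_of_int \<bar>x i - y i\<bar>" if "i < j" for i
    by (simp only: of_int_le_iff) (use y(2)[OF that] in auto)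
  hence "(\<Sum>i<j. w i * real_of_int (max (- x i) 0)) \<le> (\<Sum>i<j. w i * real_of_int \<bar>x i - y i\<bar>)"
    using assms(1) by (intro sum_mono mult_left_mono) auto
  moreover have "real_of_int (max (x j) 0) \<le> real_of_int \<bar>x j - y j\<bar>"
    by (simp only: of_int_le_iff) (use y(3) in auto)
  hence "w j * real_of_int (max (x j) 0) \<le> w j * real_of_int \<bar>x j - y j\<bar>"
    using assms(1) by (rule mult_left_mono)
  ultimately have "Xset_violation w x j \<le> (\<Sum>i\<in>{..j}. w i * real_of_int \<bar>x i - y i\<bar>)"
    unfolding Xset_violation_def by (simp add: lessThan_Suc_atMost[symmetric])
  also have "\<dots> \<le> dw w x y" by (rule sum_le_dw) (use assms y in auto)
  finally show ?thesis .
qed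

lemma Xset_violation_le_radius:
  assumes "\<And>n. w n \<ge> 0" "x \<in> Nw w (Xset j) R"
  shows "Xset_violation w x j \<le> R"
proof (rule Nw_lower_bound[OF assms(2)])
  have "x \<in> Zinf" using assms(2) unfolding Nw_def by simp
  thus "Xset_violation w x j \<le> dw w x y" if "y \<in> Xset j" for y
    using Xset_violation_le_dw assms(1) that by blast
qed (use zero_in_Xset in blast)

definition Xset_Inter_retract :: "nat set \<Rightarrow> (nat \<Rightarrow> int) \<Rightarrow> nat \<Rightarrow> int" where
  "Xset_Inter_retract J x i =
     (if i < Max J then (if i \<in> J then 0 else max (x i) 0)
      else if i = Max J then min (x i) 0 else x i)"

lemma Xset_Inter_retract_mem:
  assumes "finite J" "x \<in> Zinf"
  shows "Xset_Inter_retract J x \<in> (\<Inter>j\<in>J. Xset j)"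
proof -
  have "{i. Xset_Inter_retract J x i \<noteq> 0} \<subseteq> {i. x i \<noteq> 0}"
    unfolding Xset_Inter_retract_def by auto
  hence "Xset_Inter_retract J x \<in> Zinf"
    using assms(2) unfolding Zinf_def by (auto intro: finite_subset)
  moreover have "Xset_Inter_retract J x \<in> Xset j" if "j \<in> J" for j
  proof -
    have "j \<le> Max J" using assms(1) that by simp
    thus ?thesis
      using \<open>Xset_Inter_retract J x \<in> Zinf\<close> that
      unfolding Xset_def Xset_Inter_retract_def by auto
  qed
  ultimately show ?thesis by blast
qed

lemma dw_Xset_Inter_retract:
  assumes "finite J" "J \<noteq> {}"
  shows "dw w x (Xset_Inter_retract J x)
           = Xset_violation w x (Max J) + (\<Sum>i\<in>J - {Max J}. w i * real_of_int (max (x i) 0))"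
proof -
  define m where "m = Max J"
  let ?y = "Xset_Inter_retract J x"
  have "i < m" if "i \<in> J" "i \<noteq> m" for i
    using Max_ge[OF assms(1) that(1)] that(2) unfolding m_def by linarith
  hence J_below: "J - {m} = {..<m} \<inter> J" by auto
  have "w i * real_of_int \<bar>x i - ?y i\<bar>
          = w i * real_of_int (max (- x i) 0) + (if i \<in> J then w i * real_of_int (max (x i) 0) else 0)"
    if "i < m" for i
    using that unfolding Xset_Inter_retract_def m_def by (cases "i \<in> J") (auto simp: max_def algebra_simps)
  hence "(\<Sum>i<m. w i * real_of_int \<bar>x i - ?y i\<bar>)
           = (\<Sum>i<m. w i * real_of_int (max (- x i) 0)) + (\<Sum>i\<in>J - {m}. w i * real_of_int (max (x i) 0))"
    unfolding J_below sum.inter_restrict[OF finite_lessThan] sum.distrib[symmetric]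
    by (intro sum.cong) auto
  moreover have "\<bar>x m - ?y m\<bar> = max (x m) 0"
    unfolding Xset_Inter_retract_def m_def by auto
  moreover have "{i. x i \<noteq> ?y i} \<subseteq> {..m}"
    unfolding Xset_Inter_retract_def m_def by auto
  hence "dw w x ?y = (\<Sum>i\<le>m. w i * real_of_int \<bar>x i - ?y i\<bar>)"
    by (intro dw_eq_sum_superset) simp_all
  hence "dw w x ?y = (\<Sum>i<m. w i * real_of_int \<bar>x i - ?y i\<bar>) + w m * real_of_int \<bar>x m - ?y m\<bar>"
    by (simp add: lessThan_Suc_atMost[symmetric])
  ultimately show ?thesis unfolding Xset_violation_def m_def by simp
qed

lemma Inter_Nw_Xset_subset:
  fixes R :: real
  assumes "\<And>n. w n \<ge> 0" "finite J" "J \<noteq> {}"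
  shows "(\<Inter>j\<in>J. Nw w (Xset j) R) \<subseteq> Nw w (\<Inter>j\<in>J. Xset j) (card J * R)"
proof
  fix x assume x: "x \<in> (\<Inter>j\<in>J. Nw w (Xset j) R)"
  have "x \<in> Zinf" using x assms(3) unfolding Nw_def by auto
  have violation: "Xset_violation w x j \<le> R" if "j \<in> J" for j
    using Xset_violation_le_radius[of w] assms(1) x that by blast
  have "dw w x (Xset_Inter_retract J x)
          \<le> Xset_violation w x (Max J) + (\<Sum>i\<in>J - {Max J}. Xset_violation w x i)"
    unfolding dw_Xset_Inter_retract[OF assms(2,3)]
    by (intro add_left_mono sum_mono Xset_violation_ge_last) (use assms(1) in auto)
  also have "\<dots> \<le> R + (\<Sum>i\<in>J - {Max J}. R)"
    by (intro add_mono sum_mono violation Max_in assms(2,3)) auto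
  also have "\<dots> = card J * R"
    using assms(2,3) by (simp add: card_gt_0_iff Suc_le_eq algebra_simps)
  finally show "x \<in> Nw w (\<Inter>j\<in>J. Xset j) (card J * R)"
    by (rule Nw_memI[OF assms(1) \<open>x \<in> Zinf\<close> Xset_Inter_retract_mem[OF assms(2) \<open>x \<in> Zinf\<close>]])
qed

lemma coarsely_excisive_cover_Xset:
  assumes "\<And>n. w n \<ge> 0"
  shows "coarsely_excisive_cover w Xset"
  unfolding coarsely_excisive_cover_def
proof (intro conjI allI impI)
  fix J :: "nat set" and R :: real
  assume J: "finite J \<and> J \<noteq> {} \<and> R > 0"
  hence "real (card J) * R > 0" by (simp add: card_gt_0_iff)
  thus "\<exists>S>0. (\<Inter>j\<in>J. Nw w (Xset j) R) \<subseteq> Nw w (\<Inter>j\<in>J. Xset j) S"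
    using Inter_Nw_Xset_subset[of w J R] assms J by blast
qed (use Xset_subset_Zinf UN_Xset in auto)

theorem lemma7p3p7:
  fixes w :: "nat \<Rightarrow> real"
  assumes "w = (\<lambda>n. real n + 1) \<or> w = (\<lambda>n. 1) \<or> w = (\<lambda>n. 1 / (real n + 1))"
  shows "coarsely_excisive_cover w Xset"
  by (rule coarsely_excisive_cover_Xset) (use assms in auto)

end
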